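(* Let $X$ and $\Lambda$ be nonempty sets, $f: X\to\mathbb{R}$ a function, and $(f_\lambda)_{\lambda\in\Lambda}$ a family of real-valued functions on $X$ such that $(f_\lambda(x))_{\lambda\in\Lambda}\in\ell^\infty(\Lambda)$ for each $x\in X$. Then the family $(f_\lambda-f)_{\lambda\in\Lambda}$ is infsup-convex on $X$ if and only if for every $\alpha\in\mathbb{R}$ satisfying $f(x)+\alpha\le\sup_{\lambda\in\Lambda}f_\lambda(x)$ for all $x\in X$, there exists $\Phi\in\Delta_\Lambda$ such that $f(x)+\alpha\le\Phi((f_\lambda(x))_{\lambda\in\Lambda})$ for all $x\in X$.
   Context: For a nonempty set $\Lambda$, $\ell^\infty(\Lambda)$ is the real Banach space of bounded real-valued functions on $\Lambda$ (sup-norm), $\ell^\infty(\Lambda)^*$ its topological dual, and $\Delta_\Lambda:=\{\Phi\in\ell^\infty(\Lambda)^*:\ \Phi(\varphi)\le\sup_{\lambda\in\Lambda}\varphi(\lambda)\ \forall\varphi\in\ell^\infty(\Lambda)\}$. Let $\Delta_m:=\{(t_1,\dots,t_m)\in\mathbb{R}^m: t_j\ge0,\ \sum_j t_j=1\}$. A family $(g_\lambda)_{\lambda\in\Lambda}$ of real-valued functions on a nonempty set $X$ is infsup-convex on $X$ if for all $m\ge1$, $\mathbf{t}\in\Delta_m$ and $x_1,\dots,x_m\in X$: $\inf_{x\in X}\sup_{\lambda\in\Lambda}g_\lambda(x)\le\sup_{\lambda\in\Lambda}\sum_{j=1}^m t_j g_\lambda(x_j)$. *)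

theory Defs
  imports "HOL-Analysis.Analysis"
begin

text \<open>\<open>\<ell>\<^sup>\<infinity>(\<Lambda>)\<close>: bounded real functions on \<open>\<Lambda>\<close>, represented extensionally
  (value 0 outside \<open>\<Lambda>\<close>), with the sup-norm \<open>SUP l\<in>\<Lambda>. \<bar>\<phi> l\<bar>\<close>.\<close>
definition linf :: "'l set \<Rightarrow> ('l \<Rightarrow> real) set" where
  "linf \<Lambda> = {\<phi>. bdd_above ((\<lambda>l. \<bar>\<phi> l\<bar>) ` \<Lambda>) \<and> (\<forall>l. l \<notin> \<Lambda> \<longrightarrow> \<phi> l = 0)}"

definition linf_norm :: "'l set \<Rightarrow> ('l \<Rightarrow> real) \<Rightarrow> real" where
  "linf_norm \<Lambda> \<phi> = (SUP l\<in>\<Lambda>. \<bar>\<phi> l\<bar>)"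

definition linf_dual :: "'l set \<Rightarrow> (('l \<Rightarrow> real) \<Rightarrow> real) set" where
  "linf_dual \<Lambda> = {\<Phi>.
     (\<forall>\<phi>\<in>linf \<Lambda>. \<forall>\<psi>\<in>linf \<Lambda>. \<forall>a b::real.
        \<Phi> (\<lambda>l. a * \<phi> l + b * \<psi> l) = a * \<Phi> \<phi> + b * \<Phi> \<psi>) \<and>
     (\<exists>C. \<forall>\<phi>\<in>linf \<Lambda>. \<bar>\<Phi> \<phi>\<bar> \<le> C * linf_norm \<Lambda> \<phi>)}"

definition Delta_set :: "'l set \<Rightarrow> (('l \<Rightarrow> real) \<Rightarrow> real) set" where
  "Delta_set \<Lambda> = {\<Phi> \<in> linf_dual \<Lambda>. \<forall>\<phi>\<in>linf \<Lambda>. \<Phi> \<phi> \<le> (SUP l\<in>\<Lambda>. \<phi> l)}"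

text \<open>Infsup-convexity; the infimum over \<open>X\<close> is taken in the extended reals
  (it may be \<open>-\<infinity>\<close>).\<close>
definition infsup_convex :: "'x set \<Rightarrow> 'l set \<Rightarrow> ('l \<Rightarrow> 'x \<Rightarrow> real) \<Rightarrow> bool" where
  "infsup_convex X \<Lambda> g \<longleftrightarrow>
     (\<forall>m::nat. \<forall>t::nat \<Rightarrow> real. \<forall>xs::nat \<Rightarrow> 'x.
        m \<ge> 1 \<and> (\<forall>j\<in>{1..m}. t j \<ge> 0) \<and> (\<Sum>j=1..m. t j) = 1 \<and> (\<forall>j\<in>{1..m}. xs j \<in> X) \<longrightarrow>
        (INF x\<in>X. SUP l\<in>\<Lambda>. ereal (g l x)) \<le> (SUP l\<in>\<Lambda>. ereal (\<Sum>j=1..m. t j * g l (xs j))))"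

end

theory Submission
  imports Defs
begin

text \<open>
  If every level \<open>\<alpha>\<close> below the upper envelope \<open>sup\<^sub>\<lambda> f\<^sub>\<lambda>\<close> admits a majorant
  \<open>\<Phi> \<in> \<Delta>\<^sub>\<Lambda>\<close>, averaging \<open>f(x\<^sub>j) + \<alpha> \<le> \<Phi>(F(x\<^sub>j))\<close> over a convex combination and using
  linearity of \<open>\<Phi>\<close> together with \<open>\<Phi> \<le> sup\<close> gives infsup-convexity.

  Conversely, infsup-convexity says exactly that the pairs \<open>(F(x), f(x) + \<alpha>)\<close> generate a convex
  cone lying below the sublinear functional \<open>p(\<phi>) = sup\<^sub>\<Lambda> \<phi>\<close> on \<open>\<ell>\<^sup>\<infinity>(\<Lambda>)\<close>. The
  Mazur--Orlicz theorem then yields a linear \<open>L \<le> p\<close> with \<open>f(x) + \<alpha> \<le> L(F(x))\<close>, and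
  \<open>L \<le> p\<close> forces \<open>\<bar>L \<phi>\<bar> \<le> \<parallel>\<phi>\<parallel>\<close>, so \<open>L \<in> \<Delta>\<^sub>\<Lambda>\<close>. Mazur--Orlicz follows from
  Hahn--Banach applied to the sublinear functional \<open>\<phi> \<mapsto> inf {p(\<phi> + v) - \<beta> | (v, \<beta>) \<in> S}\<close>,
  and Hahn--Banach is proved with Zorn's lemma: a minimal sublinear functional is linear.
\<close>

lemma cSUP_mult_left_nonneg:
  fixes g :: "'a \<Rightarrow> real"
  assumes "A \<noteq> {}" "bdd_above (g ` A)" "0 \<le> c"
  shows "(SUP a\<in>A. c * g a) = c * (SUP a\<in>A. g a)"
  using continuous_at_Sup_mono[of "(*) c" "g ` A"] assms
  by (simp add: image_comp mono_def mult_left_mono continuous_mult)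

lemma cINF_mult_left_nonneg:
  fixes g :: "'a \<Rightarrow> real"
  assumes "A \<noteq> {}" "bdd_below (g ` A)" "0 \<le> c"
  shows "(INF a\<in>A. c * g a) = c * (INF a\<in>A. g a)"
  using continuous_at_Inf_mono[of "(*) c" "g ` A"] assms
  by (simp add: image_comp mono_def mult_left_mono continuous_mult)

lemma le_cINF_add_cINF:
  fixes f g :: "'a \<Rightarrow> real"
  assumes "A \<noteq> {}" "B \<noteq> {}" and "\<And>a b. a \<in> A \<Longrightarrow> b \<in> B \<Longrightarrow> x \<le> f a + g b"
  shows "x \<le> (INF a\<in>A. f a) + (INF b\<in>B. g b)"
proof -
  have "x - g b \<le> (INF a\<in>A. f a)" if "b \<in> B" for b
    by (rule cINF_greatest[OF assms(1)]) (use assms(3) that in force)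
  then have "x - (INF a\<in>A. f a) \<le> (INF b\<in>B. g b)"
    by (intro cINF_greatest[OF assms(2)]) force
  then show ?thesis by linarith
qed

lemma ereal_SUP_diff_const:
  fixes g :: "'a \<Rightarrow> real"
  assumes "A \<noteq> {}" "bdd_above (g ` A)"
  shows "(SUP a\<in>A. ereal (g a - k)) = ereal ((SUP a\<in>A. g a) - k)"
proof -
  obtain M where M: "\<And>a. a \<in> A \<Longrightarrow> g a \<le> M"
    using assms(2) by (auto simp: bdd_above_def)
  obtain a0 where a0: "a0 \<in> A" using assms(1) by auto
  have "(SUP a\<in>A. ereal (g a - k)) \<le> ereal (M - k)"
    by (rule SUP_least) (use M in auto)
  moreover have "ereal (g a0 - k) \<le> (SUP a\<in>A. ereal (g a - k))"
    using a0 by (rule SUP_upper)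
  ultimately have "\<bar>SUP a\<in>A. ereal (g a - k)\<bar> \<noteq> \<infinity>" by auto
  then have "(SUP a\<in>A. ereal (g a - k)) = ereal (SUP a\<in>A. g a - k)"
    by (simp add: ereal_SUP)
  also have "(SUP a\<in>A. g a - k) = (SUP a\<in>A. g a) - k"
    using Sup_add_eq[OF assms(2,1), of "- k"] by (simp add: algebra_simps)
  finally show ?thesis .
qed

section \<open>Sublinear functionals on spaces of real functions\<close>

definition sublinear_on :: "('l \<Rightarrow> real) set \<Rightarrow> (('l \<Rightarrow> real) \<Rightarrow> real) \<Rightarrow> bool" where
  "sublinear_on V p \<longleftrightarrow>
     (\<forall>\<phi>\<in>V. \<forall>\<psi>\<in>V. p (\<lambda>l. \<phi> l + \<psi> l) \<le> p \<phi> + p \<psi>) \<and>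
     (\<forall>c \<phi>. \<phi> \<in> V \<longrightarrow> 0 \<le> c \<longrightarrow> p (\<lambda>l. c * \<phi> l) = c * p \<phi>)"

lemma sublinear_on_add:
  "sublinear_on V p \<Longrightarrow> \<phi> \<in> V \<Longrightarrow> \<psi> \<in> V \<Longrightarrow> p (\<lambda>l. \<phi> l + \<psi> l) \<le> p \<phi> + p \<psi>"
  by (simp add: sublinear_on_def)

lemma sublinear_on_scale:
  "sublinear_on V p \<Longrightarrow> \<phi> \<in> V \<Longrightarrow> 0 \<le> c \<Longrightarrow> p (\<lambda>l. c * \<phi> l) = c * p \<phi>"
  by (simp add: sublinear_on_def)

definition linear_functional_on :: "('l \<Rightarrow> real) set \<Rightarrow> (('l \<Rightarrow> real) \<Rightarrow> real) \<Rightarrow> bool" where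
  "linear_functional_on V L \<longleftrightarrow>
     (\<forall>\<phi>\<in>V. \<forall>\<psi>\<in>V. \<forall>a b. L (\<lambda>l. a * \<phi> l + b * \<psi> l) = a * L \<phi> + b * L \<psi>)"

definition dominated_cone ::
    "('l \<Rightarrow> real) set \<Rightarrow> (('l \<Rightarrow> real) \<Rightarrow> real) \<Rightarrow> (('l \<Rightarrow> real) \<times> real) set \<Rightarrow> bool" where
  "dominated_cone V p S \<longleftrightarrow>
     (\<lambda>l. 0, 0) \<in> S \<and>
     (\<forall>(v, \<beta>)\<in>S. \<forall>(w, \<gamma>)\<in>S. (\<lambda>l. v l + w l, \<beta> + \<gamma>) \<in> S) \<and>
     (\<forall>c>0. \<forall>(v, \<beta>)\<in>S. (\<lambda>l. c * v l, c * \<beta>) \<in> S) \<and>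
     (\<forall>(v, \<beta>)\<in>S. v \<in> V \<and> \<beta> \<le> p v)"

lemma
  assumes "dominated_cone V p S"
  shows dominated_cone_zero: "(\<lambda>l. 0, 0) \<in> S"
    and dominated_cone_add: "(v, \<beta>) \<in> S \<Longrightarrow> (w, \<gamma>) \<in> S \<Longrightarrow> (\<lambda>l. v l + w l, \<beta> + \<gamma>) \<in> S"
    and dominated_cone_scale: "(v, \<beta>) \<in> S \<Longrightarrow> 0 < c \<Longrightarrow> (\<lambda>l. c * v l, c * \<beta>) \<in> S"
    and dominated_cone_mem: "(v, \<beta>) \<in> S \<Longrightarrow> v \<in> V"
    and dominated_cone_le: "(v, \<beta>) \<in> S \<Longrightarrow> \<beta> \<le> p v"
  using assms unfolding dominated_cone_def by auto

lemma dominated_coneI: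
  assumes "(\<lambda>l. 0, 0) \<in> S"
    and "\<And>v \<beta> w \<gamma>. (v, \<beta>) \<in> S \<Longrightarrow> (w, \<gamma>) \<in> S \<Longrightarrow> (\<lambda>l. v l + w l, \<beta> + \<gamma>) \<in> S"
    and "\<And>v \<beta> c. (v, \<beta>) \<in> S \<Longrightarrow> 0 < c \<Longrightarrow> (\<lambda>l. c * v l, c * \<beta>) \<in> S"
    and "\<And>v \<beta>. (v, \<beta>) \<in> S \<Longrightarrow> v \<in> V" and "\<And>v \<beta>. (v, \<beta>) \<in> S \<Longrightarrow> \<beta> \<le> p v"
  shows "dominated_cone V p S"
  using assms unfolding dominated_cone_def by auto

definition shift_INF ::
    "(('l \<Rightarrow> real) \<Rightarrow> real) \<Rightarrow> (('l \<Rightarrow> real) \<times> real) set \<Rightarrow> ('l \<Rightarrow> real) \<Rightarrow> real" where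
  "shift_INF p S \<phi> = (INF (v, \<beta>)\<in>S. p (\<lambda>l. \<phi> l + v l) - \<beta>)"

definition minimal_sublinear_on :: "('l \<Rightarrow> real) set \<Rightarrow> (('l \<Rightarrow> real) \<Rightarrow> real) \<Rightarrow> bool" where
  "minimal_sublinear_on V r \<longleftrightarrow> sublinear_on V r \<and>
     (\<forall>r'. sublinear_on V r' \<longrightarrow> (\<forall>\<phi>\<in>V. r' \<phi> \<le> r \<phi>) \<longrightarrow> (\<forall>\<phi>\<in>V. r' \<phi> = r \<phi>))"

locale function_subspace =
  fixes V :: "('l \<Rightarrow> real) set"
  assumes add_closed: "\<phi> \<in> V \<Longrightarrow> \<psi> \<in> V \<Longrightarrow> (\<lambda>l. \<phi> l + \<psi> l) \<in> V"
    and scale_closed: "\<phi> \<in> V \<Longrightarrow> (\<lambda>l. c * \<phi> l) \<in> V"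
    and zero_closed: "(\<lambda>l. 0) \<in> V"
begin

lemma uminus_closed: "\<phi> \<in> V \<Longrightarrow> (\<lambda>l. - \<phi> l) \<in> V"
  using scale_closed[of \<phi> "-1"] by simp

lemma sum_closed: "finite A \<Longrightarrow> (\<And>j. j \<in> A \<Longrightarrow> g j \<in> V) \<Longrightarrow> (\<lambda>l. \<Sum>j\<in>A. c j * g j l) \<in> V"
  by (induction A rule: finite_induct) (auto intro!: add_closed scale_closed zero_closed)

lemma sublinear_on_zero: "sublinear_on V p \<Longrightarrow> p (\<lambda>l. 0) = 0"
  using sublinear_on_scale[of V p "\<lambda>l. 0" 0] zero_closed by simp

lemma sublinear_on_uminus_le:
  assumes "sublinear_on V p" "\<phi> \<in> V"
  shows "- p (\<lambda>l. - \<phi> l) \<le> p \<phi>"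
  using sublinear_on_add[OF assms uminus_closed[OF assms(2)]] sublinear_on_zero[OF assms(1)] by simp

lemma linear_functional_on_uminus:
  assumes "linear_functional_on V L" "\<phi> \<in> V"
  shows "L (\<lambda>l. - \<phi> l) = - L \<phi>"
  using assms(1)[unfolded linear_functional_on_def, rule_format, OF assms(2) assms(2), of "-1" 0] by simp

lemma linear_functional_on_sum:
  assumes L: "linear_functional_on V L" and "finite A" "\<And>j. j \<in> A \<Longrightarrow> g j \<in> V"
  shows "L (\<lambda>l. \<Sum>j\<in>A. c j * g j l) = (\<Sum>j\<in>A. c j * L (g j))"
  using assms(2,3)
proof (induction A rule: finite_induct)
  case empty
  show ?case
    using L[unfolded linear_functional_on_def, rule_format, OF zero_closed zero_closed, of 0 0] by simp
next
  case (insert a A)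
  let ?s = "\<lambda>l. \<Sum>j\<in>A. c j * g j l"
  have "?s \<in> V" using sum_closed[of A g c] insert by simp
  then have "L (\<lambda>l. c a * g a l + 1 * ?s l) = c a * L (g a) + 1 * L ?s"
    using L[unfolded linear_functional_on_def, rule_format, of "g a" ?s "c a" 1] insert.prems by simp
  then show ?case using insert by simp
qed

context
  fixes p :: "('l \<Rightarrow> real) \<Rightarrow> real" and S :: "(('l \<Rightarrow> real) \<times> real) set"
  assumes p: "sublinear_on V p" and S: "dominated_cone V p S"
begin

lemma shift_lower_bound:
  assumes "\<phi> \<in> V" "(v, \<beta>) \<in> S"
  shows "- p (\<lambda>l. - \<phi> l) \<le> p (\<lambda>l. \<phi> l + v l) - \<beta>"
proof -
  have v: "v \<in> V" using dominated_cone_mem[OF S assms(2)] .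
  have "p v \<le> p (\<lambda>l. \<phi> l + v l) + p (\<lambda>l. - \<phi> l)"
    using sublinear_on_add[OF p add_closed[OF assms(1) v] uminus_closed[OF assms(1)]] by simp
  then show ?thesis using dominated_cone_le[OF S assms(2)] by linarith
qed

lemma bdd_below_shift:
  "\<phi> \<in> V \<Longrightarrow> bdd_below ((\<lambda>(v, \<beta>). p (\<lambda>l. \<phi> l + v l) - \<beta>) ` S)"
  by (rule bdd_belowI2[where m = "- p (\<lambda>l. - \<phi> l)"]) (use shift_lower_bound in auto)

lemma shift_INF_le:
  assumes "\<phi> \<in> V" "(v, \<beta>) \<in> S"
  shows "shift_INF p S \<phi> \<le> p (\<lambda>l. \<phi> l + v l) - \<beta>"
  unfolding shift_INF_def using cINF_lower[OF bdd_below_shift[OF assms(1)] assms(2)] by simp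

lemma shift_INF_le_self: "\<phi> \<in> V \<Longrightarrow> shift_INF p S \<phi> \<le> p \<phi>"
  using shift_INF_le[OF _ dominated_cone_zero[OF S]] by simp

lemma shift_INF_ge: "\<phi> \<in> V \<Longrightarrow> - p (\<lambda>l. - \<phi> l) \<le> shift_INF p S \<phi>"
  unfolding shift_INF_def using dominated_cone_zero[OF S] shift_lower_bound
  by (intro cINF_greatest) auto

lemma shift_INF_add:
  assumes \<phi>: "\<phi> \<in> V" and \<psi>: "\<psi> \<in> V"
  shows "shift_INF p S (\<lambda>l. \<phi> l + \<psi> l) \<le> shift_INF p S \<phi> + shift_INF p S \<psi>"
  unfolding shift_INF_def[of p S \<phi>] shift_INF_def[of p S \<psi>]
proof (rule le_cINF_add_cINF)
  fix s t assume "s \<in> S" "t \<in> S"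
  moreover obtain v \<beta> w \<gamma> where st: "s = (v, \<beta>)" "t = (w, \<gamma>)" by (cases s, cases t)
  ultimately have vS: "(v, \<beta>) \<in> S" and wS: "(w, \<gamma>) \<in> S" by auto
  have v: "v \<in> V" and w: "w \<in> V"
    using dominated_cone_mem[OF S] vS wS by auto
  have "shift_INF p S (\<lambda>l. \<phi> l + \<psi> l) \<le> p (\<lambda>l. (\<phi> l + \<psi> l) + (v l + w l)) - (\<beta> + \<gamma>)"
    using shift_INF_le[OF add_closed[OF \<phi> \<psi>] dominated_cone_add[OF S vS wS]] .
  also have "(\<lambda>l. (\<phi> l + \<psi> l) + (v l + w l)) = (\<lambda>l. (\<phi> l + v l) + (\<psi> l + w l))"
    by (simp add: algebra_simps)
  also have "p \<dots> \<le> p (\<lambda>l. \<phi> l + v l) + p (\<lambda>l. \<psi> l + w l)"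
    using sublinear_on_add[OF p] add_closed \<phi> \<psi> v w by blast
  finally show "shift_INF p S (\<lambda>l. \<phi> l + \<psi> l) \<le>
      (case s of (v, \<beta>) \<Rightarrow> p (\<lambda>l. \<phi> l + v l) - \<beta>) + (case t of (v, \<beta>) \<Rightarrow> p (\<lambda>l. \<psi> l + v l) - \<beta>)"
    using st by simp
qed (use dominated_cone_zero[OF S] in auto)

lemma shift_INF_scale:
  assumes \<phi>: "\<phi> \<in> V" and c: "0 < c"
  shows "shift_INF p S (\<lambda>l. c * \<phi> l) = c * shift_INF p S \<phi>"
proof -
  let ?scale = "\<lambda>(v, \<beta>). (\<lambda>l. c * v l, c * \<beta>)"
  have "s \<in> ?scale ` S" if "s \<in> S" for s
  proof -
    obtain v \<beta> where s: "s = (v, \<beta>)" by (cases s)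
    have "(\<lambda>l. (1 / c) * v l, (1 / c) * \<beta>) \<in> S"
      using dominated_cone_scale[OF S, of v \<beta> "1 / c"] that s c by simp
    moreover have "s = ?scale (\<lambda>l. (1 / c) * v l, (1 / c) * \<beta>)" using s c by simp
    ultimately show ?thesis by blast
  qed
  then have S_eq: "?scale ` S = S"
    using dominated_cone_scale[OF S _ c] by auto
  have "shift_INF p S (\<lambda>l. c * \<phi> l) = (INF (v, \<beta>)\<in>?scale ` S. p (\<lambda>l. c * \<phi> l + v l) - \<beta>)"
    by (simp only: S_eq shift_INF_def)
  also have "\<dots> = (INF (v, \<beta>)\<in>S. c * (p (\<lambda>l. \<phi> l + v l) - \<beta>))"
  proof -
    have "p (\<lambda>l. c * \<phi> l + c * v l) - c * \<beta> = c * (p (\<lambda>l. \<phi> l + v l) - \<beta>)"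
      if "(v, \<beta>) \<in> S" for v \<beta>
    proof -
      have "(\<lambda>l. \<phi> l + v l) \<in> V" using add_closed[OF \<phi>] dominated_cone_mem[OF S that] by blast
      then have "p (\<lambda>l. c * (\<phi> l + v l)) = c * p (\<lambda>l. \<phi> l + v l)"
        using sublinear_on_scale[OF p] c by simp
      then show ?thesis by (simp add: algebra_simps)
    qed
    then show ?thesis unfolding image_comp by (intro INF_cong) auto
  qed
  also have "\<dots> = c * shift_INF p S \<phi>"
    unfolding shift_INF_def using cINF_mult_left_nonneg[OF _ bdd_below_shift[OF \<phi>], of c] dominated_cone_zero[OF S] c
    by (auto simp: case_prod_unfold)
  finally show ?thesis .
qed

lemma sublinear_on_shift_INF: "sublinear_on V (shift_INF p S)"
  unfolding sublinear_on_def
proof (intro conjI ballI allI impI)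
  fix c :: real and \<phi> assume \<phi>: "\<phi> \<in> V" and c: "0 \<le> c"
  show "shift_INF p S (\<lambda>l. c * \<phi> l) = c * shift_INF p S \<phi>"
  proof (cases "c = 0")
    case True
    then show ?thesis
      using shift_INF_le_self[OF zero_closed] shift_INF_ge[OF zero_closed] sublinear_on_zero[OF p]
      by simp
  next
    case False
    then show ?thesis using shift_INF_scale[OF \<phi>] c by simp
  qed
qed (rule shift_INF_add)

end

section \<open>The Hahn--Banach and Mazur--Orlicz theorems\<close>

lemma sublinear_on_restrict: "sublinear_on V (restrict r V) \<longleftrightarrow> sublinear_on V r"
  using add_closed scale_closed by (simp add: sublinear_on_def)

lemma bdd_below_sublinear_below:
  assumes "\<And>r. r \<in> C \<Longrightarrow> sublinear_on V r \<and> (\<forall>\<phi>\<in>V. r \<phi> \<le> q \<phi>)" and "\<phi> \<in> V"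
  shows "bdd_below ((\<lambda>r. r \<phi>) ` C)"
proof (rule bdd_belowI2[where m = "- q (\<lambda>l. - \<phi> l)"])
  fix r assume "r \<in> C"
  then show "- q (\<lambda>l. - \<phi> l) \<le> r \<phi>"
    using assms sublinear_on_uminus_le[of r \<phi>] uminus_closed[of \<phi>] by force
qed

lemma sublinear_on_INF_chain:
  assumes "C \<noteq> {}"
    and C: "\<And>r. r \<in> C \<Longrightarrow> sublinear_on V r \<and> (\<forall>\<phi>\<in>V. r \<phi> \<le> q \<phi>)"
    and chain: "\<And>r r'. r \<in> C \<Longrightarrow> r' \<in> C \<Longrightarrow> (\<forall>\<phi>\<in>V. r \<phi> \<le> r' \<phi>) \<or> (\<forall>\<phi>\<in>V. r' \<phi> \<le> r \<phi>)"
  shows "sublinear_on V (\<lambda>\<phi>. INF r\<in>C. r \<phi>)"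
  unfolding sublinear_on_def
proof (intro conjI ballI allI impI)
  fix \<phi> \<psi> assume \<phi>: "\<phi> \<in> V" and \<psi>: "\<psi> \<in> V"
  show "(INF r\<in>C. r (\<lambda>l. \<phi> l + \<psi> l)) \<le> (INF r\<in>C. r \<phi>) + (INF r\<in>C. r \<psi>)"
  proof (rule le_cINF_add_cINF[OF assms(1) assms(1)])
    fix r1 r2 assume "r1 \<in> C" "r2 \<in> C"
    then obtain r where r: "r \<in> C" "r \<phi> \<le> r1 \<phi>" "r \<psi> \<le> r2 \<psi>"
      using chain \<phi> \<psi> by blast
    have "(INF r\<in>C. r (\<lambda>l. \<phi> l + \<psi> l)) \<le> r (\<lambda>l. \<phi> l + \<psi> l)"
      using cINF_lower[OF bdd_below_sublinear_below[OF C add_closed[OF \<phi> \<psi>]] r(1)] .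
    also have "\<dots> \<le> r \<phi> + r \<psi>" using sublinear_on_add C r(1) \<phi> \<psi> by blast
    finally show "(INF r\<in>C. r (\<lambda>l. \<phi> l + \<psi> l)) \<le> r1 \<phi> + r2 \<psi>" using r by linarith
  qed
next
  fix c :: real and \<phi> assume \<phi>: "\<phi> \<in> V" and c: "0 \<le> c"
  have "(INF r\<in>C. r (\<lambda>l. c * \<phi> l)) = (INF r\<in>C. c * r \<phi>)"
    using C sublinear_on_scale[OF _ \<phi> c] by (intro INF_cong) auto
  also have "\<dots> = c * (INF r\<in>C. r \<phi>)"
    by (rule cINF_mult_left_nonneg[OF assms(1) bdd_below_sublinear_below[OF C \<phi>] c])
  finally show "(INF r\<in>C. r (\<lambda>l. c * \<phi> l)) = c * (INF r\<in>C. r \<phi>)" .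
qed

text \<open>Restricting to functionals in \<open>extensional V\<close> makes ``pointwise below on \<open>V\<close>''
  antisymmetric, as Zorn's lemma requires.\<close>

lemma exists_minimal_sublinear_below:
  assumes q: "sublinear_on V q"
  obtains m where "minimal_sublinear_on V m" "\<forall>\<phi>\<in>V. m \<phi> \<le> q \<phi>"
proof -
  define A where "A = {r \<in> extensional V. sublinear_on V r \<and> (\<forall>\<phi>\<in>V. r \<phi> \<le> q \<phi>)}"
  define below where "below r r' \<longleftrightarrow> (\<forall>\<phi>\<in>V. r' \<phi> \<le> r \<phi>)" for r r' :: "('l \<Rightarrow> real) \<Rightarrow> real"
  have po: "partial_order_on A (relation_of below A)"
    by (auto simp: partial_order_on_def preorder_on_def refl_on_def trans_def antisym_def
        relation_of_def below_def A_def intro: order_trans)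
      (metis extensionalityI order_antisym)
  have "\<exists>u\<in>A. \<forall>r\<in>C. below r u" if "C \<in> Chains (relation_of below A)" for C
  proof (cases "C = {}")
    case True
    have "restrict q V \<in> A" using q by (simp add: A_def sublinear_on_restrict)
    then show ?thesis using True by blast
  next
    case False
    have C: "r \<in> A" if "r \<in> C" for r
      using \<open>C \<in> Chains _\<close> that by (auto simp: Chains_def relation_of_def)
    have chain: "below r r' \<or> below r' r" if "r \<in> C" "r' \<in> C" for r r'
      using \<open>C \<in> Chains _\<close> that by (auto simp: Chains_def relation_of_def)
    have CA: "sublinear_on V r \<and> (\<forall>\<phi>\<in>V. r \<phi> \<le> q \<phi>)" if "r \<in> C" for r
      using C[OF that] by (simp add: A_def)
    define u where "u = restrict (\<lambda>\<phi>. INF r\<in>C. r \<phi>) V"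
    have u_le: "u \<phi> \<le> r \<phi>" if "r \<in> C" "\<phi> \<in> V" for r \<phi>
      using cINF_lower[OF bdd_below_sublinear_below[OF CA that(2)] that(1)] that(2) by (simp add: u_def)
    have "sublinear_on V u"
      unfolding u_def sublinear_on_restrict
      by (rule sublinear_on_INF_chain[OF False CA]) (use chain below_def in blast)+
    moreover obtain r0 where "r0 \<in> C" using False by blast
    ultimately have "u \<in> A"
      using u_le CA by (force simp: A_def u_def)
    then show ?thesis using u_le by (auto simp: below_def)
  qed
  then obtain m where m: "m \<in> A" and m_min: "\<And>r. r \<in> A \<Longrightarrow> below m r \<Longrightarrow> r = m"
    using predicate_Zorn[OF po] by blast
  have "\<forall>\<phi>\<in>V. r \<phi> = m \<phi>" if r: "sublinear_on V r" "\<forall>\<phi>\<in>V. r \<phi> \<le> m \<phi>" for r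
  proof -
    have "restrict r V \<in> A" "below m (restrict r V)"
      using m r by (auto simp: A_def below_def sublinear_on_restrict intro: order_trans)
    then have "restrict r V = m" by (rule m_min)
    then show ?thesis by (metis restrict_apply')
  qed
  then show thesis
    using that m by (auto simp: minimal_sublinear_on_def A_def)
qed

lemma dominated_cone_ray:
  assumes r: "sublinear_on V r" and y: "y \<in> V"
  shows "dominated_cone V r {(\<lambda>l. t * y l, t * r y) | t. 0 \<le> t}" (is "dominated_cone V r ?R")
proof (rule dominated_coneI)
  show "(\<lambda>l. 0, 0) \<in> ?R"
    by (intro CollectI exI[of _ "0::real"]) simp
  fix v \<beta> assume "(v, \<beta>) \<in> ?R"
  then obtain s where s: "0 \<le> s" "v = (\<lambda>l. s * y l)" "\<beta> = s * r y" by blast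
  then show "v \<in> V" "\<beta> \<le> r v"
    using scale_closed[OF y] sublinear_on_scale[OF r y] by auto
  show "(\<lambda>l. c * v l, c * \<beta>) \<in> ?R" if "0 < c" for c :: real
    using s that by (intro CollectI exI[of _ "c * s"]) (simp add: mult.assoc)
  fix w \<gamma> assume "(w, \<gamma>) \<in> ?R"
  then obtain t where "0 \<le> t" "w = (\<lambda>l. t * y l)" "\<gamma> = t * r y" by blast
  then show "(\<lambda>l. v l + w l, \<beta> + \<gamma>) \<in> ?R"
    using s by (intro CollectI exI[of _ "s + t"]) (simp add: algebra_simps)
qed

text \<open>Minimality, applied to the infimal shift of \<open>r\<close> along the ray through \<open>(y, r y)\<close>,
  forces \<open>r (-y) \<le> - r y\<close>.\<close>

lemma minimal_sublinear_on_uminus: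
  assumes min: "minimal_sublinear_on V r" and y: "y \<in> V"
  shows "r (\<lambda>l. - y l) = - r y"
proof -
  let ?S = "{(\<lambda>l. t * y l, t * r y) | t. 0 \<le> t}"
  have r: "sublinear_on V r" using min by (simp add: minimal_sublinear_on_def)
  note S = dominated_cone_ray[OF r y]
  have "\<forall>\<phi>\<in>V. shift_INF r ?S \<phi> = r \<phi>"
    using min sublinear_on_shift_INF[OF r S] shift_INF_le_self[OF r S]
    unfolding minimal_sublinear_on_def by blast
  then have "r (\<lambda>l. - y l) = shift_INF r ?S (\<lambda>l. - y l)"
    using uminus_closed[OF y] by simp
  also have "\<dots> \<le> r (\<lambda>l. - y l + 1 * y l) - 1 * r y"
    by (rule shift_INF_le[OF r S uminus_closed[OF y]]) (intro CollectI exI[of _ "1::real"], simp)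
  also have "\<dots> = - r y" using sublinear_on_zero[OF r] by simp
  finally show ?thesis using sublinear_on_uminus_le[OF r y] by linarith
qed

lemma minimal_sublinear_on_linear:
  assumes min: "minimal_sublinear_on V r"
  shows "linear_functional_on V r"
proof -
  have r: "sublinear_on V r" using min by (simp add: minimal_sublinear_on_def)
  note neg = minimal_sublinear_on_uminus[OF min]
  have add: "r (\<lambda>l. \<phi> l + \<psi> l) = r \<phi> + r \<psi>" if \<phi>: "\<phi> \<in> V" and \<psi>: "\<psi> \<in> V" for \<phi> \<psi>
  proof -
    have "- r (\<lambda>l. \<phi> l + \<psi> l) = r (\<lambda>l. - \<phi> l + - \<psi> l)"
      using neg[OF add_closed[OF \<phi> \<psi>]] by simp
    also have "\<dots> \<le> - r \<phi> - r \<psi>"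
      using sublinear_on_add[OF r uminus_closed[OF \<phi>] uminus_closed[OF \<psi>]] neg \<phi> \<psi> by simp
    finally show ?thesis using sublinear_on_add[OF r \<phi> \<psi>] by linarith
  qed
  have scale: "r (\<lambda>l. c * \<phi> l) = c * r \<phi>" if \<phi>: "\<phi> \<in> V" for c \<phi>
  proof (cases "0 \<le> c")
    case True
    then show ?thesis using sublinear_on_scale[OF r \<phi>] by simp
  next
    case False
    have "r (\<lambda>l. c * \<phi> l) = - r (\<lambda>l. (- c) * \<phi> l)"
      using neg[OF scale_closed[OF \<phi>, of "- c"]] by simp
    then show ?thesis using sublinear_on_scale[OF r \<phi>, of "- c"] False by simp
  qed
  show ?thesis
    unfolding linear_functional_on_def using add scale scale_closed by simp
qed

theorem hahn_banach_sublinear: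
  assumes "sublinear_on V q"
  obtains L where "linear_functional_on V L" "\<forall>\<phi>\<in>V. L \<phi> \<le> q \<phi>"
  using exists_minimal_sublinear_below[OF assms] minimal_sublinear_on_linear by metis

theorem mazur_orlicz:
  assumes p: "sublinear_on V p" and S: "dominated_cone V p S"
  obtains L where "linear_functional_on V L" "\<forall>\<phi>\<in>V. L \<phi> \<le> p \<phi>" "\<forall>(v, \<beta>)\<in>S. \<beta> \<le> L v"
proof -
  obtain L where L: "linear_functional_on V L" and L_le: "\<forall>\<phi>\<in>V. L \<phi> \<le> shift_INF p S \<phi>"
    using hahn_banach_sublinear[OF sublinear_on_shift_INF[OF p S]] .
  have "\<beta> \<le> L v" if vS: "(v, \<beta>) \<in> S" for v \<beta>
  proof -
    have v: "v \<in> V" using dominated_cone_mem[OF S vS] .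
    have "L (\<lambda>l. - v l) \<le> shift_INF p S (\<lambda>l. - v l)"
      using L_le uminus_closed[OF v] by blast
    also have "\<dots> \<le> p (\<lambda>l. - v l + v l) - \<beta>"
      using shift_INF_le[OF p S uminus_closed[OF v] vS] .
    finally show ?thesis
      using linear_functional_on_uminus[OF L v] sublinear_on_zero[OF p] by simp
  qed
  then show thesis
    using that[OF L] L_le shift_INF_le_self[OF p S] by fastforce
qed

end

lemma (in function_subspace) lincomb_closed:
  "\<forall>(c, x)\<in>set ts. y x \<in> V \<Longrightarrow> (\<lambda>l. \<Sum>(c, x)\<leftarrow>ts. c * y x l) \<in> V"
  by (induction ts) (auto intro!: add_closed scale_closed zero_closed)

text \<open>Nonnegative combinations are represented by lists of (weight, point) pairs.\<close>

definition generated_cone :: "'x set \<Rightarrow> ('x \<Rightarrow> 'l \<Rightarrow> real) \<Rightarrow> ('x \<Rightarrow> real) \<Rightarrow> (('l \<Rightarrow> real) \<times> real) set" where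
  "generated_cone X y b =
     {((\<lambda>l. \<Sum>(c, x)\<leftarrow>ts. c * y x l), \<Sum>(c, x)\<leftarrow>ts. c * b x) | ts. \<forall>(c, x)\<in>set ts. 0 \<le> c \<and> x \<in> X}"

lemma generated_coneI:
  "\<forall>(c, x)\<in>set ts. 0 \<le> c \<and> x \<in> X \<Longrightarrow>
    ((\<lambda>l. \<Sum>(c, x)\<leftarrow>ts. c * y x l), \<Sum>(c, x)\<leftarrow>ts. c * b x) \<in> generated_cone X y b"
  unfolding generated_cone_def by blast

lemma generated_coneE:
  assumes "(v, \<beta>) \<in> generated_cone X y b"
  obtains ts where "\<forall>(c, x)\<in>set ts. 0 \<le> c \<and> x \<in> X"
    and "v = (\<lambda>l. \<Sum>(c, x)\<leftarrow>ts. c * y x l)" and "\<beta> = (\<Sum>(c, x)\<leftarrow>ts. c * b x)"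
  using assms unfolding generated_cone_def by blast

lemma generated_cone_generator: "x \<in> X \<Longrightarrow> (y x, b x) \<in> generated_cone X y b"
  using generated_coneI[of "[(1, x)]" X y b] by simp

lemma (in function_subspace) dominated_cone_generated_cone:
  assumes y: "\<forall>x\<in>X. y x \<in> V" and le: "\<forall>(v, \<beta>)\<in>generated_cone X y b. \<beta> \<le> p v"
  shows "dominated_cone V p (generated_cone X y b)"
proof (rule dominated_coneI)
  show "(\<lambda>l. 0, 0) \<in> generated_cone X y b"
    using generated_coneI[of "[]" X y b] by simp
  fix v \<beta> assume "(v, \<beta>) \<in> generated_cone X y b"
  then obtain ts where ts: "\<forall>(c, x)\<in>set ts. 0 \<le> c \<and> x \<in> X"
    and v: "v = (\<lambda>l. \<Sum>(c, x)\<leftarrow>ts. c * y x l)" and \<beta>: "\<beta> = (\<Sum>(c, x)\<leftarrow>ts. c * b x)"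
    by (rule generated_coneE)
  show "\<beta> \<le> p v" using le \<open>(v, \<beta>) \<in> _\<close> by blast
  show "v \<in> V" unfolding v using ts y by (intro lincomb_closed) auto
  show "(\<lambda>l. c * v l, c * \<beta>) \<in> generated_cone X y b" if "0 < c" for c :: real
    using generated_coneI[of "map (\<lambda>(d, x). (c * d, x)) ts" X y b] ts that
    by (auto simp: v \<beta> case_prod_unfold sum_list_const_mult o_def mult.assoc)
  fix w \<gamma> assume "(w, \<gamma>) \<in> generated_cone X y b"
  then obtain us where us: "\<forall>(c, x)\<in>set us. 0 \<le> c \<and> x \<in> X"
    and w: "w = (\<lambda>l. \<Sum>(c, x)\<leftarrow>us. c * y x l)" and \<gamma>: "\<gamma> = (\<Sum>(c, x)\<leftarrow>us. c * b x)"
    by (rule generated_coneE)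
  show "(\<lambda>l. v l + w l, \<beta> + \<gamma>) \<in> generated_cone X y b"
    using generated_coneI[of "ts @ us" X y b] ts us by (auto simp: v w \<beta> \<gamma>)
qed

lemma linf_bdd_above: "\<phi> \<in> linf \<Lambda> \<Longrightarrow> bdd_above (\<phi> ` \<Lambda>)"
  unfolding linf_def bdd_above_def by auto (meson abs_ge_self order_trans)

interpretation linf: function_subspace "linf \<Lambda>" for \<Lambda> :: "'l set"
proof
  fix \<phi> \<psi> :: "'l \<Rightarrow> real" and c :: real
  assume \<phi>: "\<phi> \<in> linf \<Lambda>"
  then obtain B where B: "\<forall>l\<in>\<Lambda>. \<bar>\<phi> l\<bar> \<le> B" unfolding linf_def bdd_above_def by auto
  then have "\<forall>l\<in>\<Lambda>. \<bar>c * \<phi> l\<bar> \<le> \<bar>c\<bar> * B" by (simp add: abs_mult mult_left_mono)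
  then show "(\<lambda>l. c * \<phi> l) \<in> linf \<Lambda>" using \<phi> unfolding linf_def bdd_above_def by auto
  assume \<psi>: "\<psi> \<in> linf \<Lambda>"
  then obtain B' where "\<forall>l\<in>\<Lambda>. \<bar>\<psi> l\<bar> \<le> B'" unfolding linf_def bdd_above_def by auto
  with B have "\<forall>l\<in>\<Lambda>. \<bar>\<phi> l + \<psi> l\<bar> \<le> B + B'" by (meson abs_triangle_ineq add_mono order_trans)
  then show "(\<lambda>l. \<phi> l + \<psi> l) \<in> linf \<Lambda>" using \<phi> \<psi> unfolding linf_def bdd_above_def by auto
qed (auto simp: linf_def)

lemma sublinear_on_SUP:
  assumes "\<Lambda> \<noteq> {}"
  shows "sublinear_on (linf \<Lambda>) (\<lambda>\<phi>. SUP l\<in>\<Lambda>. \<phi> l)"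
  unfolding sublinear_on_def
proof (intro conjI ballI allI impI)
  fix \<phi> \<psi> assume "\<phi> \<in> linf \<Lambda>" "\<psi> \<in> linf \<Lambda>"
  then show "(SUP l\<in>\<Lambda>. \<phi> l + \<psi> l) \<le> (SUP l\<in>\<Lambda>. \<phi> l) + (SUP l\<in>\<Lambda>. \<psi> l)"
    by (intro cSUP_least[OF assms] add_mono cSUP_upper linf_bdd_above)
next
  fix c :: real and \<phi> assume "\<phi> \<in> linf \<Lambda>" "0 \<le> c"
  then show "(SUP l\<in>\<Lambda>. c * \<phi> l) = c * (SUP l\<in>\<Lambda>. \<phi> l)"
    using cSUP_mult_left_nonneg[OF assms linf_bdd_above] by blast
qed

lemma SUP_le_linf_norm:
  assumes "\<Lambda> \<noteq> {}" "\<phi> \<in> linf \<Lambda>"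
  shows "(SUP l\<in>\<Lambda>. \<phi> l) \<le> linf_norm \<Lambda> \<phi>"
  unfolding linf_norm_def
  using assms by (intro cSUP_mono) (auto simp: linf_def intro: abs_ge_self)

lemma Delta_setI:
  assumes \<Lambda>: "\<Lambda> \<noteq> {}" and L: "linear_functional_on (linf \<Lambda>) L"
    and L_le: "\<forall>\<phi>\<in>linf \<Lambda>. L \<phi> \<le> (SUP l\<in>\<Lambda>. \<phi> l)"
  shows "L \<in> Delta_set \<Lambda>"
proof -
  have "\<bar>L \<phi>\<bar> \<le> 1 * linf_norm \<Lambda> \<phi>" if \<phi>: "\<phi> \<in> linf \<Lambda>" for \<phi>
  proof -
    have "L \<phi> \<le> linf_norm \<Lambda> \<phi>"
      using L_le SUP_le_linf_norm[OF \<Lambda> \<phi>] \<phi> by fastforce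
    moreover have "- L \<phi> \<le> linf_norm \<Lambda> \<phi>"
      using L_le SUP_le_linf_norm[OF \<Lambda> linf.uminus_closed[OF \<phi>]] linf.uminus_closed[OF \<phi>]
        linf.linear_functional_on_uminus[OF L \<phi>]
      by (fastforce simp: linf_norm_def)
    ultimately show ?thesis by simp
  qed
  then show ?thesis
    using L L_le unfolding Delta_set_def linf_dual_def linear_functional_on_def by blast
qed

lemma Delta_set_le_SUP_sum:
  assumes \<Phi>: "\<Phi> \<in> Delta_set \<Lambda>" and "finite A" and y: "\<And>j. j \<in> A \<Longrightarrow> y j \<in> linf \<Lambda>"
  shows "(\<Sum>j\<in>A. c j * \<Phi> (y j)) \<le> (SUP l\<in>\<Lambda>. \<Sum>j\<in>A. c j * y j l)"
proof -
  have L: "linear_functional_on (linf \<Lambda>) \<Phi>"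
    using \<Phi> by (simp add: Delta_set_def linf_dual_def linear_functional_on_def)
  have "(\<Sum>j\<in>A. c j * \<Phi> (y j)) = \<Phi> (\<lambda>l. \<Sum>j\<in>A. c j * y j l)"
    using linf.linear_functional_on_sum[OF L assms(2) y] by simp
  also have "\<dots> \<le> (SUP l\<in>\<Lambda>. \<Sum>j\<in>A. c j * y j l)"
    using \<Phi> linf.sum_closed[OF assms(2) y] by (simp add: Delta_set_def)
  finally show ?thesis .
qed

lemma bdd_above_if_eq_linf_on:
  assumes "\<phi> \<in> linf \<Lambda>" and "\<And>l. l \<in> \<Lambda> \<Longrightarrow> \<psi> l = \<phi> l"
  shows "bdd_above (\<psi> ` \<Lambda>)"
proof -
  have "\<psi> ` \<Lambda> = \<phi> ` \<Lambda>" using assms(2) by (rule image_cong[OF refl])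
  then show ?thesis using linf_bdd_above[OF assms(1)] by simp
qed

section \<open>Infsup-convexity\<close>

lemma sum_list_conv_sum_atLeastAtMost:
  "(\<Sum>p\<leftarrow>ps. h p) = (\<Sum>j=1..length ps. h (ps ! (j - 1)))"
  by (simp add: sum_list_sum_nth sum.atLeast1_atMost_eq atLeast0LessThan)

lemma sum_list_divide_weights:
  fixes g :: "'x \<Rightarrow> 'a::field"
  shows "(\<Sum>(c, x)\<leftarrow>map (\<lambda>(c, x). (c / s, x)) ts. c * g x) = (\<Sum>(c, x)\<leftarrow>ts. c * g x) / s"
  by (induction ts) (auto simp: add_divide_distrib)

lemma infsup_convexD_list:
  assumes "infsup_convex X \<Lambda> g" "ts \<noteq> []" "\<forall>(c, x)\<in>set ts. 0 \<le> c \<and> x \<in> X" "(\<Sum>(c, x)\<leftarrow>ts. c) = 1"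
  shows "(INF x\<in>X. SUP l\<in>\<Lambda>. ereal (g l x)) \<le> (SUP l\<in>\<Lambda>. ereal (\<Sum>(c, x)\<leftarrow>ts. c * g l x))"
proof -
  have "ts ! (j - 1) \<in> set ts" if "j \<in> {1..length ts}" for j
    using that by auto
  then show ?thesis
    using assms(1)[unfolded infsup_convex_def, rule_format,
        of "length ts" "\<lambda>j. fst (ts ! (j - 1))" "\<lambda>j. snd (ts ! (j - 1))"] assms(2-4)
    by (auto simp: sum_list_conv_sum_atLeastAtMost[of _ ts] case_prod_unfold Suc_le_eq)
qed

lemma convex_combination_le_SUP_if_infsup_convex:
  fixes F :: "'l \<Rightarrow> 'x \<Rightarrow> real"
  assumes \<Lambda>: "\<Lambda> \<noteq> {}" and F: "\<forall>x\<in>X. restrict (\<lambda>l. F l x) \<Lambda> \<in> linf \<Lambda>"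
    and conv: "infsup_convex X \<Lambda> (\<lambda>l x. F l x - f x)"
    and \<alpha>: "\<forall>x\<in>X. f x + \<alpha> \<le> (SUP l\<in>\<Lambda>. F l x)"
    and ts: "\<forall>(c, x)\<in>set ts. 0 \<le> c \<and> x \<in> X" and ts1: "(\<Sum>(c, x)\<leftarrow>ts. c) = 1"
  shows "(\<Sum>(c, x)\<leftarrow>ts. c * (f x + \<alpha>)) \<le> (SUP l\<in>\<Lambda>. \<Sum>(c, x)\<leftarrow>ts. c * F l x)"
proof -
  define P where "P l = (\<Sum>(c, x)\<leftarrow>ts. c * F l x)" for l
  define K where "K = (\<Sum>(c, x)\<leftarrow>ts. c * f x)"
  have P_bdd: "bdd_above (P ` \<Lambda>)"
    by (rule bdd_above_if_eq_linf_on[OF linf.lincomb_closed[of ts "\<lambda>x. restrict (\<lambda>l. F l x) \<Lambda>"]])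
      (use F ts in \<open>auto simp: P_def\<close>)
  have F_bdd: "bdd_above ((\<lambda>l. F l x) ` \<Lambda>)" if "x \<in> X" for x
    by (rule bdd_above_if_eq_linf_on[OF F[rule_format, OF that]]) simp
  have "ereal \<alpha> \<le> (INF x\<in>X. SUP l\<in>\<Lambda>. ereal (F l x - f x))"
    using \<alpha> by (intro INF_greatest) (simp add: ereal_SUP_diff_const[OF \<Lambda> F_bdd] algebra_simps)
  also have "\<dots> \<le> (SUP l\<in>\<Lambda>. ereal (\<Sum>(c, x)\<leftarrow>ts. c * (F l x - f x)))"
    using ts ts1 by (intro infsup_convexD_list[OF conv]) auto
  also have "\<dots> = (SUP l\<in>\<Lambda>. ereal (P l - K))"
    by (simp add: P_def K_def case_prod_unfold right_diff_distrib sum_list_subtractf)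
  also have "\<dots> = ereal ((SUP l\<in>\<Lambda>. P l) - K)"
    by (rule ereal_SUP_diff_const[OF \<Lambda> P_bdd])
  finally have "K + \<alpha> \<le> (SUP l\<in>\<Lambda>. P l)" by simp
  moreover have "(\<Sum>(c, x)\<leftarrow>ts. c * (f x + \<alpha>)) = K + \<alpha>"
    using ts1 by (simp add: K_def distrib_left sum_list_addf sum_list_mult_const case_prod_unfold)
  ultimately show ?thesis by (simp add: P_def)
qed

lemma weighted_sum_le_SUP_if_infsup_convex:
  fixes F :: "'l \<Rightarrow> 'x \<Rightarrow> real"
  assumes \<Lambda>: "\<Lambda> \<noteq> {}" and F: "\<forall>x\<in>X. restrict (\<lambda>l. F l x) \<Lambda> \<in> linf \<Lambda>"
    and conv: "infsup_convex X \<Lambda> (\<lambda>l x. F l x - f x)"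
    and \<alpha>: "\<forall>x\<in>X. f x + \<alpha> \<le> (SUP l\<in>\<Lambda>. F l x)"
    and ts: "\<forall>(c, x)\<in>set ts. 0 \<le> c \<and> x \<in> X"
  shows "(\<Sum>(c, x)\<leftarrow>ts. c * (f x + \<alpha>)) \<le> (SUP l\<in>\<Lambda>. \<Sum>(c, x)\<leftarrow>ts. c * F l x)"
proof -
  define s where "s = (\<Sum>(c, x)\<leftarrow>ts. c)"
  have "0 \<le> s" using ts by (auto simp: s_def intro!: sum_list_nonneg)
  show ?thesis
  proof (cases "s = 0")
    case True
    then have "\<forall>(c, x)\<in>set ts. c = 0"
      using ts sum_list_nonneg_eq_0_iff[of "map fst ts"] by (auto simp: s_def case_prod_unfold)
    then show ?thesis using \<Lambda> by (simp add: case_prod_unfold cong: map_cong)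
  next
    case False
    with \<open>0 \<le> s\<close> have s: "0 < s" by simp
    define P where "P l = (\<Sum>(c, x)\<leftarrow>ts. c * F l x)" for l
    have P_bdd: "bdd_above (P ` \<Lambda>)"
      by (rule bdd_above_if_eq_linf_on[OF linf.lincomb_closed[of ts "\<lambda>x. restrict (\<lambda>l. F l x) \<Lambda>"]])
        (use F ts in \<open>auto simp: P_def\<close>)
    let ?ts = "map (\<lambda>(c, x). (c / s, x)) ts"
    have "\<forall>(c, x)\<in>set ?ts. 0 \<le> c \<and> x \<in> X" using ts s by auto
    moreover have "(\<Sum>(c, x)\<leftarrow>?ts. c) = 1"
      using sum_list_divide_weights[where g = "\<lambda>_. 1" and s = s and ts = ts] s by (simp add: s_def)
    ultimately have "(\<Sum>(c, x)\<leftarrow>?ts. c * (f x + \<alpha>)) \<le> (SUP l\<in>\<Lambda>. \<Sum>(c, x)\<leftarrow>?ts. c * F l x)"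
      by (rule convex_combination_le_SUP_if_infsup_convex[OF \<Lambda> F conv \<alpha>])
    then have "(\<Sum>(c, x)\<leftarrow>ts. c * (f x + \<alpha>)) / s \<le> (SUP l\<in>\<Lambda>. P l / s)"
      by (simp only: sum_list_divide_weights P_def)
    also have "\<dots> = (SUP l\<in>\<Lambda>. P l) / s"
      using cSUP_mult_left_nonneg[OF \<Lambda> P_bdd, of "1 / s"] s by simp
    finally show ?thesis using s by (simp add: P_def divide_le_cancel)
  qed
qed

lemma Delta_majorant_if_infsup_convex:
  fixes F :: "'l \<Rightarrow> 'x \<Rightarrow> real"
  assumes \<Lambda>: "\<Lambda> \<noteq> {}" and F: "\<forall>x\<in>X. restrict (\<lambda>l. F l x) \<Lambda> \<in> linf \<Lambda>"
    and conv: "infsup_convex X \<Lambda> (\<lambda>l x. F l x - f x)"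
    and \<alpha>: "\<forall>x\<in>X. f x + \<alpha> \<le> (SUP l\<in>\<Lambda>. F l x)"
  shows "\<exists>\<Phi>\<in>Delta_set \<Lambda>. \<forall>x\<in>X. f x + \<alpha> \<le> \<Phi> (restrict (\<lambda>l. F l x) \<Lambda>)"
proof -
  define y where "y x = restrict (\<lambda>l. F l x) \<Lambda>" for x
  let ?S = "generated_cone X y (\<lambda>x. f x + \<alpha>)"
  have "\<beta> \<le> (SUP l\<in>\<Lambda>. v l)" if vS: "(v, \<beta>) \<in> ?S" for v \<beta>
  proof -
    obtain ts where ts: "\<forall>(c, x)\<in>set ts. 0 \<le> c \<and> x \<in> X"
      and v: "v = (\<lambda>l. \<Sum>(c, x)\<leftarrow>ts. c * y x l)" and \<beta>: "\<beta> = (\<Sum>(c, x)\<leftarrow>ts. c * (f x + \<alpha>))"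
      using vS by (rule generated_coneE)
    have "(SUP l\<in>\<Lambda>. v l) = (SUP l\<in>\<Lambda>. \<Sum>(c, x)\<leftarrow>ts. c * F l x)"
      by (intro SUP_cong) (simp_all add: v y_def)
    then show ?thesis
      using weighted_sum_le_SUP_if_infsup_convex[OF \<Lambda> F conv \<alpha> ts] \<beta> by simp
  qed
  then have "dominated_cone (linf \<Lambda>) (\<lambda>\<phi>. SUP l\<in>\<Lambda>. \<phi> l) ?S"
    using F by (intro linf.dominated_cone_generated_cone) (auto simp: y_def)
  then obtain L where L: "linear_functional_on (linf \<Lambda>) L" "\<forall>\<phi>\<in>linf \<Lambda>. L \<phi> \<le> (SUP l\<in>\<Lambda>. \<phi> l)"
    and L_S: "\<forall>(v, \<beta>)\<in>?S. \<beta> \<le> L v"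
    by (rule linf.mazur_orlicz[OF sublinear_on_SUP[OF \<Lambda>]])
  have "f x + \<alpha> \<le> L (y x)" if "x \<in> X" for x
    using L_S generated_cone_generator[OF that, of y "\<lambda>x. f x + \<alpha>"] by fastforce
  then show ?thesis using Delta_setI[OF \<Lambda> L] by (auto simp: y_def)
qed

lemma convex_combination_le_SUP_if_Delta_majorant:
  fixes F :: "'l \<Rightarrow> 'x \<Rightarrow> real"
  assumes F: "\<forall>x\<in>X. restrict (\<lambda>l. F l x) \<Lambda> \<in> linf \<Lambda>"
    and \<Phi>: "\<Phi> \<in> Delta_set \<Lambda>" and maj: "\<forall>x\<in>X. f x + \<alpha> \<le> \<Phi> (restrict (\<lambda>l. F l x) \<Lambda>)"
    and J: "finite J" "\<forall>j\<in>J. 0 \<le> t j \<and> xs j \<in> X" "(\<Sum>j\<in>J. t j) = 1"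
  shows "(\<Sum>j\<in>J. t j * f (xs j)) + \<alpha> \<le> (SUP l\<in>\<Lambda>. \<Sum>j\<in>J. t j * F l (xs j))"
proof -
  have "(\<Sum>j\<in>J. t j * f (xs j)) + \<alpha> = (\<Sum>j\<in>J. t j * (f (xs j) + \<alpha>))"
    using J(3) by (simp add: distrib_left sum.distrib flip: sum_distrib_right)
  also have "\<dots> \<le> (\<Sum>j\<in>J. t j * \<Phi> (restrict (\<lambda>l. F l (xs j)) \<Lambda>))"
    using J(2) maj by (intro sum_mono mult_left_mono) auto
  also have "\<dots> \<le> (SUP l\<in>\<Lambda>. \<Sum>j\<in>J. t j * restrict (\<lambda>l. F l (xs j)) \<Lambda> l)"
    using F J(2) by (intro Delta_set_le_SUP_sum[OF \<Phi> J(1)]) auto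
  also have "\<dots> = (SUP l\<in>\<Lambda>. \<Sum>j\<in>J. t j * F l (xs j))"
    by (intro SUP_cong) simp_all
  finally show ?thesis .
qed

lemma infsup_convex_if_Delta_majorants:
  fixes F :: "'l \<Rightarrow> 'x \<Rightarrow> real"
  assumes X: "X \<noteq> {}" and \<Lambda>: "\<Lambda> \<noteq> {}" and F: "\<forall>x\<in>X. restrict (\<lambda>l. F l x) \<Lambda> \<in> linf \<Lambda>"
    and H: "\<forall>\<alpha>. (\<forall>x\<in>X. f x + \<alpha> \<le> (SUP l\<in>\<Lambda>. F l x)) \<longrightarrow>
      (\<exists>\<Phi>\<in>Delta_set \<Lambda>. \<forall>x\<in>X. f x + \<alpha> \<le> \<Phi> (restrict (\<lambda>l. F l x) \<Lambda>))"
  shows "infsup_convex X \<Lambda> (\<lambda>l x. F l x - f x)"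
  unfolding infsup_convex_def
proof (intro allI impI, elim conjE)
  fix m :: nat and t :: "nat \<Rightarrow> real" and xs :: "nat \<Rightarrow> 'x"
  assume t0: "\<forall>j\<in>{1..m}. 0 \<le> t j" and t1: "(\<Sum>j=1..m. t j) = 1" and xs: "\<forall>j\<in>{1..m}. xs j \<in> X"
  define Q where "Q l = (\<Sum>j=1..m. t j * F l (xs j))" for l
  define K where "K = (\<Sum>j=1..m. t j * f (xs j))"
  have SUP_F: "(SUP l\<in>\<Lambda>. ereal (F l x - f x)) = ereal ((SUP l\<in>\<Lambda>. F l x) - f x)" if "x \<in> X" for x
    using ereal_SUP_diff_const[OF \<Lambda> bdd_above_if_eq_linf_on[OF F[rule_format, OF that]]] by simp
  have Q_bdd: "bdd_above (Q ` \<Lambda>)"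
    by (rule bdd_above_if_eq_linf_on[OF linf.sum_closed[of "{1..m}" "\<lambda>j. restrict (\<lambda>l. F l (xs j)) \<Lambda>"]])
      (use F xs in \<open>auto simp: Q_def\<close>)
  have "(INF x\<in>X. SUP l\<in>\<Lambda>. ereal (F l x - f x)) \<le> (SUP l\<in>\<Lambda>. ereal (Q l - K))"
  proof (cases "INF x\<in>X. SUP l\<in>\<Lambda>. ereal (F l x - f x)")
    case (real a)
    then have "\<forall>x\<in>X. f x + a \<le> (SUP l\<in>\<Lambda>. F l x)"
      using INF_lower[of _ X "\<lambda>x. SUP l\<in>\<Lambda>. ereal (F l x - f x)"] SUP_F by fastforce
    then obtain \<Phi> where "\<Phi> \<in> Delta_set \<Lambda>" "\<forall>x\<in>X. f x + a \<le> \<Phi> (restrict (\<lambda>l. F l x) \<Lambda>)"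
      using H by blast
    then have "K + a \<le> (SUP l\<in>\<Lambda>. Q l)"
      unfolding K_def Q_def using t0 t1 xs
      by (intro convex_combination_le_SUP_if_Delta_majorant[OF F]) auto
    then show ?thesis using real ereal_SUP_diff_const[OF \<Lambda> Q_bdd] by simp
  next
    case PInf
    obtain x where x: "x \<in> X" using X by blast
    have "(INF x\<in>X. SUP l\<in>\<Lambda>. ereal (F l x - f x)) \<le> (SUP l\<in>\<Lambda>. ereal (F l x - f x))"
      by (rule INF_lower[OF x])
    then show ?thesis using PInf SUP_F[OF x] by simp
  qed simp
  also have "\<dots> = (SUP l\<in>\<Lambda>. ereal (\<Sum>j=1..m. t j * (F l (xs j) - f (xs j))))"
    by (simp add: Q_def K_def right_diff_distrib sum_subtractf)
  finally show "(INF x\<in>X. SUP l\<in>\<Lambda>. ereal (F l x - f x))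
      \<le> (SUP l\<in>\<Lambda>. ereal (\<Sum>j=1..m. t j * (F l (xs j) - f (xs j))))" .
qed

theorem theorem3p2:
  fixes X :: "'x set" and \<Lambda> :: "'l set"
    and f :: "'x \<Rightarrow> real" and F :: "'l \<Rightarrow> 'x \<Rightarrow> real"
  assumes "X \<noteq> {}" and "\<Lambda> \<noteq> {}"
    and "\<forall>x\<in>X. restrict (\<lambda>l. F l x) \<Lambda> \<in> linf \<Lambda>"
  shows "infsup_convex X \<Lambda> (\<lambda>l x. F l x - f x) \<longleftrightarrow>
    (\<forall>\<alpha>::real. (\<forall>x\<in>X. f x + \<alpha> \<le> (SUP l\<in>\<Lambda>. F l x)) \<longrightarrow>
       (\<exists>\<Phi>\<in>Delta_set \<Lambda>. \<forall>x\<in>X. f x + \<alpha> \<le> \<Phi> (restrict (\<lambda>l. F l x) \<Lambda>)))"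
  using Delta_majorant_if_infsup_convex[OF assms(2,3)] infsup_convex_if_Delta_majorants[OF assms]
  by blast

end
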